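(* Let $U_0, c_0, \rho_0 > 0$ be constants. Let $f_1, f_2, f_3, f_4 : \mathbb{R} \to \mathbb{R}$ be continuously differentiable functions and let $k_i, l_i, m_i$ ($i = 1,\dots,4$) be real numbers with $k_3 k_4 \neq 0$. Write $r_i = \sqrt{k_i^2 + l_i^2 + m_i^2}$ and $\xi_i = k_i x + l_i y + m_i z$. Define $$v_x'(x,y,z,t) = k_1 f_1[\xi_1 - (k_1 U_0 - c_0 r_1)t] + k_2 f_2[\xi_2 - (k_2 U_0 + c_0 r_2)t] + \tfrac{l_3}{k_3} f_3[\xi_3 - k_3 U_0 t] + \tfrac{m_4}{k_4} f_4[\xi_4 - k_4 U_0 t],$$ $$v_y'(x,y,z,t) = l_1 f_1[\xi_1 - (k_1 U_0 - c_0 r_1)t] + l_2 f_2[\xi_2 - (k_2 U_0 + c_0 r_2)t] - f_3[\xi_3 - k_3 U_0 t],$$ $$v_z'(x,y,z,t) = m_1 f_1[\xi_1 - (k_1 U_0 - c_0 r_1)t] + m_2 f_2[\xi_2 - (k_2 U_0 + c_0 r_2)t] - f_4[\xi_4 - k_4 U_0 t],$$ $$p'(x,y,z,t) = -c_0\rho_0 r_1 f_1[\xi_1 - (k_1 U_0 - c_0 r_1)t] + c_0 \rho_0 r_2 f_2[\xi_2 - (k_2 U_0 + c_0 r_2)t].$$ Then $(v_x', v_y', v_z', p')$ satisfies pointwise on $\mathbb{R}^3 \times \mathbb{R}$ the system $$\partial_t v_x' + U_0 \partial_x v_x' + \tfrac{1}{\rho_0}\partial_x p' = 0,\quad \partial_t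 v_y' + U_0 \partial_x v_y' + \tfrac{1}{\rho_0}\partial_y p' = 0,\quad \partial_t v_z' + U_0 \partial_x v_z' + \tfrac{1}{\rho_0}\partial_z p' = 0,$$ $$\partial_t p' + U_0 \partial_x p' + \rho_0 c_0^2(\partial_x v_x' + \partial_y v_y' + \partial_z v_z') = 0,$$ and the initial conditions $v_x'(x,y,z,0) = k_1 f_1(\xi_1) + k_2 f_2(\xi_2) + \frac{l_3}{k_3} f_3(\xi_3) + \frac{m_4}{k_4} f_4(\xi_4)$, $v_y'(x,y,z,0) = l_1 f_1(\xi_1) + l_2 f_2(\xi_2) - f_3(\xi_3)$, $v_z'(x,y,z,0) = m_1 f_1(\xi_1) + m_2 f_2(\xi_2) - f_4(\xi_4)$, $p'(x,y,z,0) = -c_0\rho_0 r_1 f_1(\xi_1) + c_0\rho_0 r_2 f_2(\xi_2)$.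
   Context: This system is the 3D Euler equations linearized at the uniform flow with velocity $(U_0,0,0)$, density $\rho_0$, pressure $p_0$, sound speed $c_0$. *)

theory Defs
  imports "HOL-Analysis.Analysis"
begin

definition rr :: "(nat \<Rightarrow> real) \<Rightarrow> (nat \<Rightarrow> real) \<Rightarrow> (nat \<Rightarrow> real) \<Rightarrow> nat \<Rightarrow> real" where
  "rr k l m i = sqrt ((k i)\<^sup>2 + (l i)\<^sup>2 + (m i)\<^sup>2)"

definition xi :: "(nat \<Rightarrow> real) \<Rightarrow> (nat \<Rightarrow> real) \<Rightarrow> (nat \<Rightarrow> real) \<Rightarrow> nat \<Rightarrow> real \<Rightarrow> real \<Rightarrow> real \<Rightarrow> real" where
  "xi k l m i x y z = k i * x + l i * y + m i * z"

definition arg1 where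
  "arg1 U0 c0 k l m x y z t = xi k l m 1 x y z - (k 1 * U0 - c0 * rr k l m 1) * t"
definition arg2 where
  "arg2 U0 c0 k l m x y z t = xi k l m 2 x y z - (k 2 * U0 + c0 * rr k l m 2) * t"
definition arg3 where
  "arg3 U0 (k :: nat \<Rightarrow> real) l m x y z t = xi k l m 3 x y z - k 3 * U0 * t"
definition arg4 where
  "arg4 U0 (k :: nat \<Rightarrow> real) l m x y z t = xi k l m 4 x y z - k 4 * U0 * t"

definition vx :: "real \<Rightarrow> real \<Rightarrow> (nat \<Rightarrow> real \<Rightarrow> real) \<Rightarrow> (nat \<Rightarrow> real) \<Rightarrow> (nat \<Rightarrow> real) \<Rightarrow> (nat \<Rightarrow> real)
    \<Rightarrow> real \<Rightarrow> real \<Rightarrow> real \<Rightarrow> real \<Rightarrow> real" where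
  "vx U0 c0 f k l m x y z t =
     k 1 * f 1 (arg1 U0 c0 k l m x y z t) + k 2 * f 2 (arg2 U0 c0 k l m x y z t)
     + l 3 / k 3 * f 3 (arg3 U0 k l m x y z t) + m 4 / k 4 * f 4 (arg4 U0 k l m x y z t)"

definition vy :: "real \<Rightarrow> real \<Rightarrow> (nat \<Rightarrow> real \<Rightarrow> real) \<Rightarrow> (nat \<Rightarrow> real) \<Rightarrow> (nat \<Rightarrow> real) \<Rightarrow> (nat \<Rightarrow> real)
    \<Rightarrow> real \<Rightarrow> real \<Rightarrow> real \<Rightarrow> real \<Rightarrow> real" where
  "vy U0 c0 f k l m x y z t =
     l 1 * f 1 (arg1 U0 c0 k l m x y z t) + l 2 * f 2 (arg2 U0 c0 k l m x y z t)
     - f 3 (arg3 U0 k l m x y z t)"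

definition vz :: "real \<Rightarrow> real \<Rightarrow> (nat \<Rightarrow> real \<Rightarrow> real) \<Rightarrow> (nat \<Rightarrow> real) \<Rightarrow> (nat \<Rightarrow> real) \<Rightarrow> (nat \<Rightarrow> real)
    \<Rightarrow> real \<Rightarrow> real \<Rightarrow> real \<Rightarrow> real \<Rightarrow> real" where
  "vz U0 c0 f k l m x y z t =
     m 1 * f 1 (arg1 U0 c0 k l m x y z t) + m 2 * f 2 (arg2 U0 c0 k l m x y z t)
     - f 4 (arg4 U0 k l m x y z t)"

definition pp :: "real \<Rightarrow> real \<Rightarrow> real \<Rightarrow> (nat \<Rightarrow> real \<Rightarrow> real) \<Rightarrow> (nat \<Rightarrow> real) \<Rightarrow> (nat \<Rightarrow> real) \<Rightarrow> (nat \<Rightarrow> real)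
    \<Rightarrow> real \<Rightarrow> real \<Rightarrow> real \<Rightarrow> real \<Rightarrow> real" where
  "pp U0 c0 rho0 f k l m x y z t =
     - c0 * rho0 * rr k l m 1 * f 1 (arg1 U0 c0 k l m x y z t)
     + c0 * rho0 * rr k l m 2 * f 2 (arg2 U0 c0 k l m x y z t)"

end

theory Submission
  imports Defs
begin

text \<open>The system is linear with constant coefficients, so a superposition of plane waves
  \<open>A f(k x + l y + m z - w t)\<close> solves it as soon as each amplitude vector \<open>A\<close> lies in the
  kernel of the symbol, i.e. is an eigenvector of the acoustic matrix with eigenvalue
  \<open>w - U0 k\<close>. The eigenvalues \<open>\<plusminus>c0 r\<close> carry the two sound waves \<open>f1, f2\<close>; the eigenvalue
  \<open>0\<close> carries the pressure-free waves with velocity orthogonal to \<open>(k, l, m)\<close>, which is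
  why \<open>f3, f4\<close> have amplitudes \<open>(l3/k3, -1, 0)\<close> and \<open>(m4/k4, 0, -1)\<close>.\<close>

definition linearized_euler ::
  "real \<Rightarrow> real \<Rightarrow> real \<Rightarrow> (real \<Rightarrow> real \<Rightarrow> real \<Rightarrow> real \<Rightarrow> real) \<Rightarrow> (real \<Rightarrow> real \<Rightarrow> real \<Rightarrow> real \<Rightarrow> real)
    \<Rightarrow> (real \<Rightarrow> real \<Rightarrow> real \<Rightarrow> real \<Rightarrow> real) \<Rightarrow> (real \<Rightarrow> real \<Rightarrow> real \<Rightarrow> real \<Rightarrow> real) \<Rightarrow> bool" where
  "linearized_euler U0 c0 rho0 Vx Vy Vz P \<longleftrightarrow> (\<forall>x y z t.
      deriv (\<lambda>s. Vx x y z s) t + U0 * deriv (\<lambda>s. Vx s y z t) x + 1 / rho0 * deriv (\<lambda>s. P s y z t) x = 0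
    \<and> deriv (\<lambda>s. Vy x y z s) t + U0 * deriv (\<lambda>s. Vy s y z t) x + 1 / rho0 * deriv (\<lambda>s. P x s z t) y = 0
    \<and> deriv (\<lambda>s. Vz x y z s) t + U0 * deriv (\<lambda>s. Vz s y z t) x + 1 / rho0 * deriv (\<lambda>s. P x y s t) z = 0
    \<and> deriv (\<lambda>s. P x y z s) t + U0 * deriv (\<lambda>s. P s y z t) x
        + rho0 * c0\<^sup>2 * (deriv (\<lambda>s. Vx s y z t) x + deriv (\<lambda>s. Vy x s z t) y + deriv (\<lambda>s. Vz x y s t) z) = 0)"

definition plane_waves ::
  "nat set \<Rightarrow> (nat \<Rightarrow> real \<Rightarrow> real) \<Rightarrow> (nat \<Rightarrow> real) \<Rightarrow> (nat \<Rightarrow> real) \<Rightarrow> (nat \<Rightarrow> real) \<Rightarrow> (nat \<Rightarrow> real)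
    \<Rightarrow> (nat \<Rightarrow> real) \<Rightarrow> real \<Rightarrow> real \<Rightarrow> real \<Rightarrow> real \<Rightarrow> real" where
  "plane_waves I f k l m w a x y z t = (\<Sum>i\<in>I. a i * f i (xi k l m i x y z - w i * t))"

text \<open>The plane wave \<open>(a, b, c, q) g(k x + l y + m z - w t)\<close> solves the system for every differentiable profile \<open>g\<close>.\<close>

definition euler_mode ::
  "real \<Rightarrow> real \<Rightarrow> real \<Rightarrow> real \<Rightarrow> real \<Rightarrow> real \<Rightarrow> real \<Rightarrow> real \<Rightarrow> real \<Rightarrow> real \<Rightarrow> real \<Rightarrow> bool" where
  "euler_mode U0 c0 rho0 k l m w a b c q \<longleftrightarrow>
     - w * a + U0 * k * a + k * q / rho0 = 0
   \<and> - w * b + U0 * k * b + l * q / rho0 = 0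
   \<and> - w * c + U0 * k * c + m * q / rho0 = 0
   \<and> - w * q + U0 * k * q + rho0 * c0\<^sup>2 * (k * a + l * b + m * c) = 0"

lemma deriv_sum_comp:
  fixes f :: "nat \<Rightarrow> real \<Rightarrow> real"
  assumes "finite I"
    and "\<And>i. i \<in> I \<Longrightarrow> f i differentiable at (\<phi> i s)"
    and "\<And>i. i \<in> I \<Longrightarrow> (\<phi> i has_real_derivative d i) (at s)"
  shows "deriv (\<lambda>s. \<Sum>i\<in>I. a i * f i (\<phi> i s)) s = (\<Sum>i\<in>I. d i * a i * deriv (f i) (\<phi> i s))"
proof (rule DERIV_imp_deriv, rule DERIV_sum)
  fix i assume "i \<in> I"
  then have "(f i has_real_derivative deriv (f i) (\<phi> i s)) (at (\<phi> i s))"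
    using assms(2) DERIV_deriv_iff_real_differentiable by blast
  from DERIV_cmult[OF DERIV_chain2[OF this assms(3)[OF \<open>i \<in> I\<close>]], of "a i"]
  show "((\<lambda>s. a i * f i (\<phi> i s)) has_real_derivative d i * a i * deriv (f i) (\<phi> i s)) (at s)"
    by (simp add: ac_simps)
qed

lemma
  fixes f :: "nat \<Rightarrow> real \<Rightarrow> real" and k l m w :: "nat \<Rightarrow> real" and x y z t :: real
  assumes "finite I" and "\<And>i u. i \<in> I \<Longrightarrow> f i differentiable at u"
  defines "f' i \<equiv> deriv (f i) (xi k l m i x y z - w i * t)"
  shows deriv_plane_waves_t: "deriv (\<lambda>s. plane_waves I f k l m w a x y z s) t = (\<Sum>i\<in>I. - w i * a i * f' i)"
    and deriv_plane_waves_x: "deriv (\<lambda>s. plane_waves I f k l m w a s y z t) x = (\<Sum>i\<in>I. k i * a i * f' i)"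
    and deriv_plane_waves_y: "deriv (\<lambda>s. plane_waves I f k l m w a x s z t) y = (\<Sum>i\<in>I. l i * a i * f' i)"
    and deriv_plane_waves_z: "deriv (\<lambda>s. plane_waves I f k l m w a x y s t) z = (\<Sum>i\<in>I. m i * a i * f' i)"
  unfolding plane_waves_def f'_def xi_def
  by (rule deriv_sum_comp[where f = f, OF assms(1,2)]; auto intro!: derivative_eq_intros)+

lemma euler_mode_residuals:
  assumes "euler_mode U0 c0 rho0 k l m w a b c q"
  shows "- w * a * D + U0 * (k * a * D) + 1 / rho0 * (k * q * D) = 0" (is "?rx = 0")
    and "- w * b * D + U0 * (k * b * D) + 1 / rho0 * (l * q * D) = 0" (is "?ry = 0")
    and "- w * c * D + U0 * (k * c * D) + 1 / rho0 * (m * q * D) = 0" (is "?rz = 0")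
    and "- w * q * D + U0 * (k * q * D) + rho0 * c0\<^sup>2 * (k * a * D + l * b * D + m * c * D) = 0"
      (is "?rp = 0")
proof -
  have "?rx = (- w * a + U0 * k * a + k * q / rho0) * D"
    and "?ry = (- w * b + U0 * k * b + l * q / rho0) * D"
    and "?rz = (- w * c + U0 * k * c + m * q / rho0) * D"
    and "?rp = (- w * q + U0 * k * q + rho0 * c0\<^sup>2 * (k * a + l * b + m * c)) * D"
    by (simp_all add: algebra_simps)
  with assms show "?rx = 0" "?ry = 0" "?rz = 0" "?rp = 0"
    unfolding euler_mode_def by simp_all
qed

lemma plane_waves_linearized_euler:
  fixes f :: "nat \<Rightarrow> real \<Rightarrow> real"
  assumes "finite I" and "\<And>i u. i \<in> I \<Longrightarrow> f i differentiable at u"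
    and "\<And>i. i \<in> I \<Longrightarrow> euler_mode U0 c0 rho0 (k i) (l i) (m i) (w i) (a i) (b i) (c i) (q i)"
  shows "linearized_euler U0 c0 rho0 (plane_waves I f k l m w a) (plane_waves I f k l m w b)
           (plane_waves I f k l m w c) (plane_waves I f k l m w q)"
  using assms(1,2) euler_mode_residuals[OF assms(3)]
  by (simp add: linearized_euler_def deriv_plane_waves_t deriv_plane_waves_x deriv_plane_waves_y
      deriv_plane_waves_z sum_distrib_left sum.distrib[symmetric] sum.neutral)

lemma acoustic_mode:
  fixes k l m :: real
  assumes "rho0 \<noteq> 0" and "s\<^sup>2 = 1"
  defines "r \<equiv> sqrt (k\<^sup>2 + l\<^sup>2 + m\<^sup>2)"
  shows "euler_mode U0 c0 rho0 k l m (k * U0 + s * c0 * r) k l m (s * c0 * rho0 * r)"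
proof -
  have "(s * c0 * r) * (s * c0 * rho0 * r) = s\<^sup>2 * rho0 * c0\<^sup>2 * r\<^sup>2"
    by (simp add: power2_eq_square ac_simps)
  also have "\<dots> = rho0 * c0\<^sup>2 * (k * k + l * l + m * m)"
    unfolding r_def assms(2) by (simp add: power2_eq_square)
  finally have "(s * c0 * r) * (s * c0 * rho0 * r) = rho0 * c0\<^sup>2 * (k * k + l * l + m * m)" .
  with assms(1) show ?thesis
    unfolding euler_mode_def by (simp add: algebra_simps)
qed

lemma vortical_mode:
  assumes "k * a + l * b + m * c = 0"
  shows "euler_mode U0 c0 rho0 k l m (k * U0) a b c 0"
  using assms unfolding euler_mode_def by simp

theorem proposition5:
  fixes U0 c0 rho0 :: real and f :: "nat \<Rightarrow> real \<Rightarrow> real" and k l m :: "nat \<Rightarrow> real"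
  assumes "U0 > 0" "c0 > 0" "rho0 > 0"
    and "\<And>i. i \<in> {1,2,3,4} \<Longrightarrow> f i C1_differentiable_on UNIV"
    and "k 3 * k 4 \<noteq> 0"
  defines "Vx \<equiv> vx U0 c0 f k l m" and "Vy \<equiv> vy U0 c0 f k l m" and "Vz \<equiv> vz U0 c0 f k l m"
    and "P \<equiv> pp U0 c0 rho0 f k l m"
  shows "(\<forall>x y z t.
      deriv (\<lambda>s. Vx x y z s) t + U0 * deriv (\<lambda>s. Vx s y z t) x + 1 / rho0 * deriv (\<lambda>s. P s y z t) x = 0
    \<and> deriv (\<lambda>s. Vy x y z s) t + U0 * deriv (\<lambda>s. Vy s y z t) x + 1 / rho0 * deriv (\<lambda>s. P x s z t) y = 0
    \<and> deriv (\<lambda>s. Vz x y z s) t + U0 * deriv (\<lambda>s. Vz s y z t) x + 1 / rho0 * deriv (\<lambda>s. P x y s t) z = 0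
    \<and> deriv (\<lambda>s. P x y z s) t + U0 * deriv (\<lambda>s. P s y z t) x
        + rho0 * c0\<^sup>2 * (deriv (\<lambda>s. Vx s y z t) x + deriv (\<lambda>s. Vy x s z t) y + deriv (\<lambda>s. Vz x y s t) z) = 0)
    \<and> (\<forall>x y z.
      Vx x y z 0 = k 1 * f 1 (xi k l m 1 x y z) + k 2 * f 2 (xi k l m 2 x y z)
          + l 3 / k 3 * f 3 (xi k l m 3 x y z) + m 4 / k 4 * f 4 (xi k l m 4 x y z)
    \<and> Vy x y z 0 = l 1 * f 1 (xi k l m 1 x y z) + l 2 * f 2 (xi k l m 2 x y z) - f 3 (xi k l m 3 x y z)
    \<and> Vz x y z 0 = m 1 * f 1 (xi k l m 1 x y z) + m 2 * f 2 (xi k l m 2 x y z) - f 4 (xi k l m 4 x y z)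
    \<and> P x y z 0 = - c0 * rho0 * rr k l m 1 * f 1 (xi k l m 1 x y z) + c0 * rho0 * rr k l m 2 * f 2 (xi k l m 2 x y z))"
proof -
  let ?I = "{1, 2, 3, 4} :: nat set"
  define w where "w = (\<lambda>_ :: nat. 0 :: real)
    (1 := k 1 * U0 - c0 * rr k l m 1, 2 := k 2 * U0 + c0 * rr k l m 2, 3 := k 3 * U0, 4 := k 4 * U0)"
  define ax where "ax = (\<lambda>_ :: nat. 0 :: real)(1 := k 1, 2 := k 2, 3 := l 3 / k 3, 4 := m 4 / k 4)"
  define ay where "ay = (\<lambda>_ :: nat. 0 :: real)(1 := l 1, 2 := l 2, 3 := -1, 4 := 0)"
  define az where "az = (\<lambda>_ :: nat. 0 :: real)(1 := m 1, 2 := m 2, 3 := 0, 4 := -1)"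
  define aq where "aq = (\<lambda>_ :: nat. 0 :: real)(1 := - c0 * rho0 * rr k l m 1, 2 := c0 * rho0 * rr k l m 2, 3 := 0, 4 := 0)"
  have waves: "Vx = plane_waves ?I f k l m w ax" "Vy = plane_waves ?I f k l m w ay"
    "Vz = plane_waves ?I f k l m w az" "P = plane_waves ?I f k l m w aq"
    unfolding Vx_def Vy_def Vz_def P_def
    by (intro ext; simp add: plane_waves_def vx_def vy_def vz_def pp_def arg1_def arg2_def arg3_def arg4_def
        w_def ax_def ay_def az_def aq_def algebra_simps)+
  have "f i differentiable at u" if "i \<in> ?I" for i u
    using assms(4)[OF that] by (simp add: C1_differentiable_on_eq)
  moreover have "euler_mode U0 c0 rho0 (k i) (l i) (m i) (w i) (ax i) (ay i) (az i) (aq i)" if "i \<in> ?I" for i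
    using that assms(3,5)
      acoustic_mode[where ?rho0.0 = rho0 and s = "-1" and k = "k 1" and l = "l 1" and m = "m 1"]
      acoustic_mode[where ?rho0.0 = rho0 and s = 1 and k = "k 2" and l = "l 2" and m = "m 2"]
      vortical_mode[where k = "k 3" and l = "l 3" and m = "m 3" and a = "l 3 / k 3" and b = "-1" and c = 0]
      vortical_mode[where k = "k 4" and l = "l 4" and m = "m 4" and a = "m 4 / k 4" and b = 0 and c = "-1"]
    by (auto simp: w_def ax_def ay_def az_def aq_def rr_def mult.commute)
  ultimately have "linearized_euler U0 c0 rho0 Vx Vy Vz P"
    unfolding waves by (intro plane_waves_linearized_euler) auto
  then show ?thesis
    unfolding linearized_euler_def
    by (rule conjI) (simp add: Vx_def Vy_def Vz_def P_def vx_def vy_def vz_def pp_def arg1_def arg2_def arg3_def arg4_def)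
qed

end
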